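(* Let $I\unlhd \mathcal O_K[x_1,\dots,x_n]$ be an ideal and let $w\in\mathbb R^n$. Then $$\overline{\operatorname{in}_{(-1,w)}(\pi^{-1}I)}\big|_{t=1}=\operatorname{in}_{\nu,w}(I).$$
   Context: Let $K$ be a complete field with a non-trivial discrete valuation $\nu:K\to\mathbb R\cup\{\infty\}$ and a uniformizing parameter $p\in K$, with $\nu$ normalized so that $\nu(p)=1$. Let $\mathcal O_K$ be its ring of integers and $\mathfrak K$ its residue field. Let $R\subseteq\mathcal O_K$ be a dense noetherian subring with $p\in R$. Write $x=(x_1,\dots,x_n)$. The map $\pi:R[[t]][x]\to\mathcal O_K[x]$, $t\mapsto p$, is surjective with kernel $\langle p-t\rangle$. For an ideal $I$, $\pi^{-1}I$ denotes its preimage in $R[[t]][x]$. Initial forms over $K$: for $f=\sum_\alpha c_\alpha x^\alpha\in K[x]$ and $w\in\mathbb R^n$, $\operatorname{in}_{\nu,w}(f)=\sum \overline{c_\alpha p^{-\nu(c_\alpha)}}\,x^\alpha\in\mathfrak K[x]$. The sum runs over those $\alpha$ with $c_\alpha\neq0$ for which $w\cdot\alpha-\nu(c_\alpha)$ is maximal, and the bar denotes reduction to $\mathfrak K$. For a subset $I$, $\operatorname{in}_{\nu,w}(I)$ is the ideal of $\mathfrak K[x]$ generated by all $\operatorname{in}_{\nu,w}(f)$ with $f\in I$. Initial forms over $R[[t]]$: for $f=\sum_{\beta,\alpha}c_{\alpha,\beta}t^\beta x^\alpha\in R[[t]][x]$ and $w\in\mathbb R_{<0}\times\mathbb R^n$,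 $\operatorname{in}_w(f)\in R[t,x]$ is the sum of the terms $c_{\alpha,\beta}t^\beta x^\alpha$ for which $w\cdot(\beta,\alpha)$ is maximal. For an ideal $J$, $\operatorname{in}_w(J)\unlhd R[t,x]$ is generated by all $\operatorname{in}_w(f)$ with $f\in J$. For $J\unlhd R[t,x]$, $\overline{J}|_{t=1}$ denotes the image of $J$ under the map $R[t,x]\to\mathfrak K[x]$. This map reduces coefficients modulo the maximal ideal of $\mathcal O_K$ and substitutes $t=1$. *)

theory Defs
  imports "HOL-Library.Poly_Mapping" "HOL-Computational_Algebra.Formal_Power_Series"
begin

(* K is a field of type 'k; the discrete valuation nu is normalized (nu p = 1), so its
   values on K^* are integers: v :: 'k => int, with nu(0) = infinity encoded by the
   convention that v is only consulted on nonzero elements. *)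
definition discrete_valuation :: "('k::field \<Rightarrow> int) \<Rightarrow> 'k \<Rightarrow> bool" where
  "discrete_valuation v p \<longleftrightarrow>
     p \<noteq> 0 \<and> v p = 1 \<and>
     (\<forall>x y. x \<noteq> 0 \<longrightarrow> y \<noteq> 0 \<longrightarrow> v (x * y) = v x + v y) \<and>
     (\<forall>x y. x \<noteq> 0 \<longrightarrow> y \<noteq> 0 \<longrightarrow> x + y \<noteq> 0 \<longrightarrow> v (x + y) \<ge> min (v x) (v y))"

definition vclose :: "('k::field \<Rightarrow> int) \<Rightarrow> int \<Rightarrow> 'k \<Rightarrow> 'k \<Rightarrow> bool" where
  "vclose v N x y \<longleftrightarrow> x = y \<or> v (x - y) \<ge> N"

definition vconverges :: "('k::field \<Rightarrow> int) \<Rightarrow> (nat \<Rightarrow> 'k) \<Rightarrow> 'k \<Rightarrow> bool" where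
  "vconverges v s L \<longleftrightarrow> (\<forall>N. \<exists>M. \<forall>m\<ge>M. vclose v N (s m) L)"

definition vcauchy :: "('k::field \<Rightarrow> int) \<Rightarrow> (nat \<Rightarrow> 'k) \<Rightarrow> bool" where
  "vcauchy v s \<longleftrightarrow> (\<forall>N. \<exists>M. \<forall>m\<ge>M. \<forall>k\<ge>M. vclose v N (s m) (s k))"

definition vcomplete :: "('k::field \<Rightarrow> int) \<Rightarrow> bool" where
  "vcomplete v \<longleftrightarrow> (\<forall>s. vcauchy v s \<longrightarrow> (\<exists>L. vconverges v s L))"

definition OK :: "('k::field \<Rightarrow> int) \<Rightarrow> 'k set" where
  "OK v = {x. x = 0 \<or> v x \<ge> 0}"

definition residue_map :: "('k::field \<Rightarrow> int) \<Rightarrow> ('k \<Rightarrow> 'r::field) \<Rightarrow> bool" where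
  "residue_map v res \<longleftrightarrow>
     (\<forall>x\<in>OK v. \<forall>y\<in>OK v. res (x + y) = res x + res y \<and> res (x * y) = res x * res y) \<and>
     res 1 = 1 \<and> res ` OK v = UNIV \<and>
     (\<forall>x\<in>OK v. res x = 0 \<longleftrightarrow> (x = 0 \<or> v x > 0))"

definition is_ideal :: "'a::comm_ring_1 set \<Rightarrow> 'a set \<Rightarrow> bool" where
  "is_ideal A J \<longleftrightarrow> J \<subseteq> A \<and> 0 \<in> J \<and> (\<forall>x\<in>J. \<forall>y\<in>J. x + y \<in> J) \<and>
      (\<forall>a\<in>A. \<forall>x\<in>J. a * x \<in> J)"

definition ideal_gen :: "'a::comm_ring_1 set \<Rightarrow> 'a set \<Rightarrow> 'a set" where
  "ideal_gen A S = \<Inter>{J. is_ideal A J \<and> S \<subseteq> J}"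

definition is_subring :: "'a::comm_ring_1 set \<Rightarrow> bool" where
  "is_subring A \<longleftrightarrow> 0 \<in> A \<and> 1 \<in> A \<and> (\<forall>x\<in>A. \<forall>y\<in>A. x + y \<in> A \<and> x - y \<in> A \<and> x * y \<in> A)"

definition noetherian_subring :: "'a::comm_ring_1 set \<Rightarrow> bool" where
  "noetherian_subring A \<longleftrightarrow> is_subring A \<and>
     (\<forall>J. is_ideal A J \<longrightarrow> (\<exists>G. finite G \<and> G \<subseteq> J \<and> J = ideal_gen A G))"

definition dense_noeth_subring :: "('k::field \<Rightarrow> int) \<Rightarrow> 'k \<Rightarrow> 'k set \<Rightarrow> bool" where
  "dense_noeth_subring v p R \<longleftrightarrow> noetherian_subring R \<and> R \<subseteq> OK v \<and> p \<in> R \<and>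
     (\<forall>x\<in>OK v. \<forall>N. \<exists>r\<in>R. vclose v N x r)"

(* K[x]         : ('n =>0 nat) =>0 'k
   R[[t]][x]    : ('n =>0 nat) =>0 'k fps  (with all coefficients in R)
   R[t,x]       : ('n option =>0 nat) =>0 'k (None is the variable t; coefficients in R)
   residue[x]   : ('n =>0 nat) =>0 'r *)

definition coeff_poly :: "'k set \<Rightarrow> (('n \<Rightarrow>\<^sub>0 nat) \<Rightarrow>\<^sub>0 'k::comm_ring_1) set" where
  "coeff_poly A = {f. \<forall>a. Poly_Mapping.lookup f a \<in> A}"

definition coeff_pstx :: "'k set \<Rightarrow> (('n \<Rightarrow>\<^sub>0 nat) \<Rightarrow>\<^sub>0 'k::comm_ring_1 fps) set" where
  "coeff_pstx A = {F. \<forall>a b. fps_nth (Poly_Mapping.lookup F a) b \<in> A}"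

definition coeff_ptx :: "'k set \<Rightarrow> (('n option \<Rightarrow>\<^sub>0 nat) \<Rightarrow>\<^sub>0 'k::comm_ring_1) set" where
  "coeff_ptx A = {G. \<forall>m. Poly_Mapping.lookup G m \<in> A}"

definition wdot :: "('n::finite \<Rightarrow> real) \<Rightarrow> ('n \<Rightarrow>\<^sub>0 nat) \<Rightarrow> real" where
  "wdot w a = (\<Sum>i\<in>UNIV. w i * real (Poly_Mapping.lookup a i))"

definition tx_mono :: "('n::finite \<Rightarrow>\<^sub>0 nat) \<Rightarrow> nat \<Rightarrow> ('n option \<Rightarrow>\<^sub>0 nat)" where
  "tx_mono a b = Abs_poly_mapping (\<lambda>j. case j of None \<Rightarrow> b | Some i \<Rightarrow> Poly_Mapping.lookup a i)"

definition x_part :: "('n::finite option \<Rightarrow>\<^sub>0 nat) \<Rightarrow> ('n \<Rightarrow>\<^sub>0 nat)" where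
  "x_part m = Abs_poly_mapping (\<lambda>i. Poly_Mapping.lookup m (Some i))"

definition fps_at :: "('k::field \<Rightarrow> int) \<Rightarrow> 'k \<Rightarrow> 'k fps \<Rightarrow> 'k" where
  "fps_at v p f = (THE L. vconverges v (\<lambda>N. \<Sum>b<N. fps_nth f b * p ^ b) L)"

definition pi_map :: "('k::field \<Rightarrow> int) \<Rightarrow> 'k \<Rightarrow> (('n \<Rightarrow>\<^sub>0 nat) \<Rightarrow>\<^sub>0 'k fps) \<Rightarrow> (('n \<Rightarrow>\<^sub>0 nat) \<Rightarrow>\<^sub>0 'k)" where
  "pi_map v p F = (\<Sum>a\<in>Poly_Mapping.keys F. Poly_Mapping.single a (fps_at v p (Poly_Mapping.lookup F a)))"

definition pi_preimage :: "('k::field \<Rightarrow> int) \<Rightarrow> 'k \<Rightarrow> 'k set \<Rightarrow> (('n \<Rightarrow>\<^sub>0 nat) \<Rightarrow>\<^sub>0 'k) set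
     \<Rightarrow> (('n \<Rightarrow>\<^sub>0 nat) \<Rightarrow>\<^sub>0 'k fps) set" where
  "pi_preimage v p R I = {F \<in> coeff_pstx R. pi_map v p F \<in> I}"

(* initial form over R[[t]] w.r.t. the weight (-1, w): the term c t^b x^a has weight -b + w.a *)
definition tx_terms :: "(('n::finite \<Rightarrow>\<^sub>0 nat) \<Rightarrow>\<^sub>0 'k::comm_ring_1 fps) \<Rightarrow> (('n \<Rightarrow>\<^sub>0 nat) \<times> nat) set" where
  "tx_terms F = {(a, b). fps_nth (Poly_Mapping.lookup F a) b \<noteq> 0}"

definition in_tw :: "('n::finite \<Rightarrow> real) \<Rightarrow> (('n \<Rightarrow>\<^sub>0 nat) \<Rightarrow>\<^sub>0 'k::comm_ring_1 fps)
     \<Rightarrow> (('n option \<Rightarrow>\<^sub>0 nat) \<Rightarrow>\<^sub>0 'k)" where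
  "in_tw w F =
     (let wt = (\<lambda>(a, b). wdot w a - real b);
          M = Sup (wt ` tx_terms F)
      in \<Sum>(a, b)\<in>{ab \<in> tx_terms F. wt ab = M}.
            Poly_Mapping.single (tx_mono a b) (fps_nth (Poly_Mapping.lookup F a) b))"

definition in_tw_ideal :: "'k set \<Rightarrow> ('n::finite \<Rightarrow> real) \<Rightarrow> (('n \<Rightarrow>\<^sub>0 nat) \<Rightarrow>\<^sub>0 'k::comm_ring_1 fps) set
     \<Rightarrow> (('n option \<Rightarrow>\<^sub>0 nat) \<Rightarrow>\<^sub>0 'k) set" where
  "in_tw_ideal R w J = ideal_gen (coeff_ptx R) (in_tw w ` J)"

definition reduce_t1 :: "('k \<Rightarrow> 'r::field) \<Rightarrow> (('n::finite option \<Rightarrow>\<^sub>0 nat) \<Rightarrow>\<^sub>0 'k::comm_ring_1)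
     \<Rightarrow> (('n \<Rightarrow>\<^sub>0 nat) \<Rightarrow>\<^sub>0 'r)" where
  "reduce_t1 res G = (\<Sum>m\<in>Poly_Mapping.keys G. Poly_Mapping.single (x_part m) (res (Poly_Mapping.lookup G m)))"

definition in_vw :: "('k::field \<Rightarrow> int) \<Rightarrow> 'k \<Rightarrow> ('k \<Rightarrow> 'r::field) \<Rightarrow> ('n::finite \<Rightarrow> real)
     \<Rightarrow> (('n \<Rightarrow>\<^sub>0 nat) \<Rightarrow>\<^sub>0 'k) \<Rightarrow> (('n \<Rightarrow>\<^sub>0 nat) \<Rightarrow>\<^sub>0 'r)" where
  "in_vw v p res w f =
     (let wt = (\<lambda>a. wdot w a - real_of_int (v (Poly_Mapping.lookup f a)));
          M = Max (wt ` Poly_Mapping.keys f)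
      in \<Sum>a\<in>{a \<in> Poly_Mapping.keys f. wt a = M}.
           Poly_Mapping.single a (res (Poly_Mapping.lookup f a * p powi (- v (Poly_Mapping.lookup f a)))))"

definition in_vw_ideal :: "('k::field \<Rightarrow> int) \<Rightarrow> 'k \<Rightarrow> ('k \<Rightarrow> 'r::field) \<Rightarrow> ('n::finite \<Rightarrow> real)
     \<Rightarrow> (('n \<Rightarrow>\<^sub>0 nat) \<Rightarrow>\<^sub>0 'k) set \<Rightarrow> (('n \<Rightarrow>\<^sub>0 nat) \<Rightarrow>\<^sub>0 'r) set" where
  "in_vw_ideal v p res w I = ideal_gen UNIV (in_vw v p res w ` I)"

end

theory Submission
  imports Defs
begin

text \<open>
  Write F = \<Sum> f_a(t) x^a with f_a in R[[t]], of order b_a and lowest coefficient c_a. For a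
  fixed monomial x^a the (-1,w)-heaviest term of F is c_a t^b_a x^a. On the other side
  \<nu>(f_a(p)) \<ge> b_a, with equality exactly when c_a is a unit, and then the normalized residue of
  f_a(p) is that of c_a. Hence the reduction of the initial form of F at t = 1 is either 0 or the
  \<nu>-initial form of \<pi> F. Conversely every f in O_K[x] lifts to an F whose coefficients are
  p-adic digit expansions with digits in R that are 0 or units, and for such a lift the reduction
  is exactly the \<nu>-initial form of f. Finally, reduction is a ring homomorphism from R[t,x] onto
  the polynomial ring over the residue field (R is dense, so it maps onto the residue field), so
  it carries the ideal generated by the initial forms onto the ideal generated by their
  reductions.
\<close>

lemma poly_mapping_sum_single:
  "(G :: 'a \<Rightarrow>\<^sub>0 'b::comm_monoid_add) =
     (\<Sum>m\<in>Poly_Mapping.keys G. Poly_Mapping.single m (Poly_Mapping.lookup G m))"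
proof (rule poly_mapping_eqI)
  fix k
  have "Poly_Mapping.lookup (\<Sum>m\<in>Poly_Mapping.keys G. Poly_Mapping.single m (Poly_Mapping.lookup G m)) k
      = (\<Sum>m\<in>Poly_Mapping.keys G. if m = k then Poly_Mapping.lookup G m else 0)"
    unfolding lookup_sum by (intro sum.cong) (auto simp: lookup_single when_def)
  also have "\<dots> = Poly_Mapping.lookup G k"
    by (simp add: sum.delta in_keys_iff)
  finally show "Poly_Mapping.lookup G k =
      Poly_Mapping.lookup (\<Sum>m\<in>Poly_Mapping.keys G. Poly_Mapping.single m (Poly_Mapping.lookup G m)) k"
    by simp
qed

lemma times_poly_mapping_sum_single:
  "(G :: 'a::comm_monoid_add \<Rightarrow>\<^sub>0 'b::comm_ring_1) * H =
   (\<Sum>m\<in>Poly_Mapping.keys G. \<Sum>m'\<in>Poly_Mapping.keys H.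
      Poly_Mapping.single (m + m') (Poly_Mapping.lookup G m * Poly_Mapping.lookup H m'))"
proof -
  have "G * H = (\<Sum>m\<in>Poly_Mapping.keys G. Poly_Mapping.single m (Poly_Mapping.lookup G m)) *
                (\<Sum>m'\<in>Poly_Mapping.keys H. Poly_Mapping.single m' (Poly_Mapping.lookup H m'))"
    using poly_mapping_sum_single[of G] poly_mapping_sum_single[of H] by simp
  also have "\<dots> = (\<Sum>m\<in>Poly_Mapping.keys G. \<Sum>m'\<in>Poly_Mapping.keys H.
      Poly_Mapping.single m (Poly_Mapping.lookup G m) * Poly_Mapping.single m' (Poly_Mapping.lookup H m'))"
    by (subst sum_distrib_right) (simp add: sum_distrib_left)
  finally show ?thesis by (simp add: mult_single)
qed

lemma lookup_map_zero:
  "g 0 = 0 \<Longrightarrow> Poly_Mapping.lookup (Poly_Mapping.map g f) k = g (Poly_Mapping.lookup f k)"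
  by transfer (auto simp: when_def)

lemma x_part_tx_mono [simp]: "x_part (tx_mono a b) = a"
  unfolding x_part_def tx_mono_def by (simp add: lookup_Abs_poly_mapping)

lemma x_part_add: "x_part (m + m') = x_part m + x_part m'"
  unfolding x_part_def by (rule poly_mapping_eqI) (simp add: lookup_Abs_poly_mapping lookup_add)

definition semiring_closed :: "'a::comm_ring_1 set \<Rightarrow> bool" where
  "semiring_closed A \<longleftrightarrow> 0 \<in> A \<and> (\<forall>x\<in>A. \<forall>y\<in>A. x + y \<in> A \<and> x * y \<in> A)"

lemma coeff_ptx_zero: "0 \<in> A \<Longrightarrow> 0 \<in> coeff_ptx A"
  by (simp add: coeff_ptx_def)

lemma coeff_ptx_add:
  "semiring_closed A \<Longrightarrow> G \<in> coeff_ptx A \<Longrightarrow> H \<in> coeff_ptx A \<Longrightarrow> G + H \<in> coeff_ptx A"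
  by (simp add: coeff_ptx_def lookup_add semiring_closed_def)

lemma coeff_ptx_single: "0 \<in> A \<Longrightarrow> c \<in> A \<Longrightarrow> Poly_Mapping.single m c \<in> coeff_ptx A"
  by (simp add: coeff_ptx_def lookup_single when_def)

lemma coeff_ptx_sum:
  "semiring_closed A \<Longrightarrow> (\<And>x. x \<in> X \<Longrightarrow> G x \<in> coeff_ptx A) \<Longrightarrow> sum G X \<in> coeff_ptx A"
  by (induction X rule: infinite_finite_induct)
     (auto intro: coeff_ptx_add coeff_ptx_zero simp: semiring_closed_def)

lemma coeff_ptx_mult:
  assumes "semiring_closed A" "G \<in> coeff_ptx A" "H \<in> coeff_ptx A"
  shows "G * H \<in> coeff_ptx A"
  unfolding times_poly_mapping_sum_single
  using assms by (intro coeff_ptx_sum coeff_ptx_single) (auto simp: semiring_closed_def coeff_ptx_def)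

lemma is_ideal_coeff_ptx: "semiring_closed A \<Longrightarrow> is_ideal (coeff_ptx A) (coeff_ptx A)"
  unfolding is_ideal_def
  by (auto intro: coeff_ptx_add coeff_ptx_mult coeff_ptx_zero simp: semiring_closed_def)

section \<open>Generated ideals and their images\<close>

lemma subset_ideal_gen: "S \<subseteq> ideal_gen A S"
  unfolding ideal_gen_def by auto

lemma ideal_gen_least: "is_ideal A J \<Longrightarrow> S \<subseteq> J \<Longrightarrow> ideal_gen A S \<subseteq> J"
  unfolding ideal_gen_def by auto

lemma is_ideal_ideal_gen:
  assumes "is_ideal A A" "S \<subseteq> A"
  shows "is_ideal A (ideal_gen A S)"
proof -
  let ?F = "{J. is_ideal A J \<and> S \<subseteq> J}"
  have "A \<in> ?F" using assms by auto
  then show ?thesis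
    unfolding ideal_gen_def is_ideal_def[of A "\<Inter> ?F"] by (auto simp: is_ideal_def)
qed

context
  fixes A :: "'a::comm_ring_1 set" and \<phi> :: "'a \<Rightarrow> 'b::comm_ring_1"
  assumes subring: "is_ideal A A"
    and hom_add: "\<And>x y. x \<in> A \<Longrightarrow> y \<in> A \<Longrightarrow> \<phi> (x + y) = \<phi> x + \<phi> y"
    and hom_mult: "\<And>x y. x \<in> A \<Longrightarrow> y \<in> A \<Longrightarrow> \<phi> (x * y) = \<phi> x * \<phi> y"
begin

lemma hom_zero: "\<phi> 0 = 0"
  using hom_add[of 0 0] subring by (simp add: is_ideal_def)

lemma is_ideal_preimage:
  assumes "is_ideal UNIV J"
  shows "is_ideal A {x \<in> A. \<phi> x \<in> J}"
  using assms subring unfolding is_ideal_def by (auto simp: hom_add hom_mult hom_zero)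

lemma is_ideal_image:
  assumes "is_ideal A J" and onto: "\<phi> ` A = UNIV"
  shows "is_ideal UNIV (\<phi> ` J)"
proof -
  have JA: "J \<subseteq> A" "0 \<in> J" using assms(1) by (auto simp: is_ideal_def)
  show ?thesis
    unfolding is_ideal_def
  proof (intro conjI ballI)
    show "\<phi> ` J \<subseteq> UNIV" "0 \<in> \<phi> ` J"
      using JA hom_zero by (auto intro: rev_image_eqI[of 0])
    fix x y assume "x \<in> \<phi> ` J" "y \<in> \<phi> ` J"
    then obtain g h where "g \<in> J" "h \<in> J" "x = \<phi> g" "y = \<phi> h" by auto
    moreover have "g + h \<in> J" using \<open>g \<in> J\<close> \<open>h \<in> J\<close> assms(1) by (simp add: is_ideal_def)
    moreover have "\<phi> (g + h) = \<phi> g + \<phi> h" using \<open>g \<in> J\<close> \<open>h \<in> J\<close> JA by (intro hom_add) auto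
    ultimately show "x + y \<in> \<phi> ` J" by (metis image_eqI)
  next
    fix a x assume "x \<in> \<phi> ` J"
    then obtain g where g: "g \<in> J" "x = \<phi> g" by auto
    obtain a' where a': "a' \<in> A" "\<phi> a' = a" using onto by (metis UNIV_I imageE)
    have "a' * g \<in> J" using g a' assms(1) by (simp add: is_ideal_def)
    moreover have "\<phi> (a' * g) = a * x" using g a' JA by (subst hom_mult) auto
    ultimately show "a * x \<in> \<phi> ` J" by (metis image_eqI)
  qed
qed

lemma image_ideal_gen:
  assumes "S \<subseteq> A" and onto: "\<phi> ` A = UNIV"
    and "\<phi> ` S \<subseteq> insert 0 T" and "T \<subseteq> \<phi> ` S"
  shows "\<phi> ` ideal_gen A S = ideal_gen UNIV T"
proof
  have T: "is_ideal UNIV (ideal_gen UNIV T)"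
    by (rule is_ideal_ideal_gen) (auto simp: is_ideal_def)
  have "S \<subseteq> {x \<in> A. \<phi> x \<in> ideal_gen UNIV T}"
    using assms(1,3) subset_ideal_gen[of T UNIV] T by (auto simp: is_ideal_def)
  then have "ideal_gen A S \<subseteq> {x \<in> A. \<phi> x \<in> ideal_gen UNIV T}"
    by (intro ideal_gen_least is_ideal_preimage T)
  then show "\<phi> ` ideal_gen A S \<subseteq> ideal_gen UNIV T" by auto
next
  have "is_ideal A (ideal_gen A S)" by (rule is_ideal_ideal_gen[OF subring assms(1)])
  then have "is_ideal UNIV (\<phi> ` ideal_gen A S)" by (rule is_ideal_image[OF _ onto])
  moreover have "T \<subseteq> \<phi> ` ideal_gen A S" using assms(4) subset_ideal_gen[of S A] by blast
  ultimately show "ideal_gen UNIV T \<subseteq> \<phi> ` ideal_gen A S" by (rule ideal_gen_least)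
qed

end

section \<open>Initial forms over \<open>R[[t]]\<close>\<close>

definition lowest_coeff :: "'a::zero fps \<Rightarrow> 'a" where
  "lowest_coeff f = fps_nth f (subdegree f)"

definition top_weight :: "('n::finite \<Rightarrow> real) \<Rightarrow> (('n \<Rightarrow>\<^sub>0 nat) \<Rightarrow>\<^sub>0 'a::zero fps)
    \<Rightarrow> ('n \<Rightarrow>\<^sub>0 nat) \<Rightarrow> real" where
  "top_weight w F a = wdot w a - real (subdegree (Poly_Mapping.lookup F a))"

definition initial_weight :: "('n::finite \<Rightarrow> real) \<Rightarrow> (('n \<Rightarrow>\<^sub>0 nat) \<Rightarrow>\<^sub>0 'a::zero fps) \<Rightarrow> real" where
  "initial_weight w F = Max (top_weight w F ` Poly_Mapping.keys F)"

definition initial_keys :: "('n::finite \<Rightarrow> real) \<Rightarrow> (('n \<Rightarrow>\<^sub>0 nat) \<Rightarrow>\<^sub>0 'a::zero fps)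
    \<Rightarrow> ('n \<Rightarrow>\<^sub>0 nat) set" where
  "initial_keys w F = {a \<in> Poly_Mapping.keys F. top_weight w F a = initial_weight w F}"

lemma top_weight_le_initial_weight:
  "a \<in> Poly_Mapping.keys F \<Longrightarrow> top_weight w F a \<le> initial_weight w F"
  unfolding initial_weight_def by (rule Max_ge) auto

lemma initial_keys_nonempty:
  assumes "F \<noteq> 0"
  shows "initial_keys w F \<noteq> {}"
proof -
  have "initial_weight w F \<in> top_weight w F ` Poly_Mapping.keys F"
    unfolding initial_weight_def using assms by (intro Max_in) auto
  then show ?thesis by (auto simp: initial_keys_def)
qed

lemma lowest_coeff_nonzero: "a \<in> Poly_Mapping.keys F \<Longrightarrow> lowest_coeff (Poly_Mapping.lookup F a) \<noteq> 0"
  by (simp add: lowest_coeff_def in_keys_iff)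

text \<open>The weight w\<cdot>a - b of t^b x^a is largest for the least b, i.e. for the lowest t-term of the
  coefficient of x^a.\<close>

lemma in_tw_eq_sum:
  fixes F :: "('n::finite \<Rightarrow>\<^sub>0 nat) \<Rightarrow>\<^sub>0 'k::comm_ring_1 fps"
  assumes "F \<noteq> 0"
  shows "in_tw w F = (\<Sum>a\<in>initial_keys w F.
    Poly_Mapping.single (tx_mono a (subdegree (Poly_Mapping.lookup F a))) (lowest_coeff (Poly_Mapping.lookup F a)))"
proof -
  let ?wt = "\<lambda>(a, b). wdot w a - real b" and ?M = "initial_weight w F"
  let ?top = "\<lambda>a. (a, subdegree (Poly_Mapping.lookup F a))"
  have term_key: "a \<in> Poly_Mapping.keys F" "subdegree (Poly_Mapping.lookup F a) \<le> b"
    if "(a, b) \<in> tx_terms F" for a b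
    using that by (auto simp: tx_terms_def in_keys_iff intro: subdegree_leI)
  have le: "?wt ab \<le> ?M" if "ab \<in> tx_terms F" for ab
  proof -
    obtain a b where [simp]: "ab = (a, b)" by force
    have "wdot w a - real b \<le> top_weight w F a"
      using that term_key[of a b] by (simp add: top_weight_def)
    also have "\<dots> \<le> ?M" using that term_key[of a b] by (simp add: top_weight_le_initial_weight)
    finally show ?thesis by simp
  qed
  obtain a0 where a0: "a0 \<in> initial_keys w F" using initial_keys_nonempty[OF assms] by blast
  then have "?top a0 \<in> tx_terms F" "?wt (?top a0) = ?M"
    using lowest_coeff_nonzero by (auto simp: tx_terms_def initial_keys_def top_weight_def lowest_coeff_def)
  then have sup: "Sup (?wt ` tx_terms F) = ?M"
    using le by (intro cSup_eq_maximum) (auto intro: rev_image_eqI)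
  have "{ab \<in> tx_terms F. ?wt ab = ?M} = ?top ` initial_keys w F"
  proof (intro set_eqI iffI)
    fix ab assume ab: "ab \<in> {ab \<in> tx_terms F. ?wt ab = ?M}"
    obtain a b where [simp]: "ab = (a, b)" by force
    have "top_weight w F a \<le> ?M"
      using ab term_key[of a b] top_weight_le_initial_weight[of a F w] by simp
    then show "ab \<in> ?top ` initial_keys w F"
      using ab term_key[of a b] by (auto simp: initial_keys_def top_weight_def)
  next
    fix ab assume "ab \<in> ?top ` initial_keys w F"
    then show "ab \<in> {ab \<in> tx_terms F. ?wt ab = ?M}"
      using lowest_coeff_nonzero
      by (auto simp: tx_terms_def initial_keys_def top_weight_def lowest_coeff_def)
  qed
  moreover have "inj_on ?top (initial_keys w F)" by (auto intro: inj_onI)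
  ultimately show ?thesis
    unfolding in_tw_def Let_def sup by (simp add: sum.reindex lowest_coeff_def)
qed

lemma in_tw_mem_coeff_ptx:
  assumes "semiring_closed A" "F \<in> coeff_pstx A"
  shows "in_tw w F \<in> coeff_ptx A"
proof (cases "F = 0")
  case True then show ?thesis
    using assms(1) by (simp add: in_tw_def tx_terms_def coeff_ptx_zero semiring_closed_def)
next
  case False
  show ?thesis unfolding in_tw_eq_sum[OF False]
    using assms by (intro coeff_ptx_sum coeff_ptx_single)
      (auto simp: lowest_coeff_def coeff_pstx_def semiring_closed_def)
qed

section \<open>Discretely valued fields\<close>

locale valued_field =
  fixes v :: "'k::field \<Rightarrow> int" and p :: 'k
  assumes discrete_valuation: "discrete_valuation v p"
begin

text \<open>\<open>v 0\<close> is a junk value standing for \<open>\<nu>(0) = \<infinity>\<close>, hence the explicit case \<open>x = 0\<close>.\<close>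

definition val_ge :: "int \<Rightarrow> 'k \<Rightarrow> bool" where
  "val_ge n x \<longleftrightarrow> x = 0 \<or> n \<le> v x"

lemma uniformizer_nonzero: "p \<noteq> 0" and val_uniformizer: "v p = 1"
  and val_mult: "x \<noteq> 0 \<Longrightarrow> y \<noteq> 0 \<Longrightarrow> v (x * y) = v x + v y"
  and val_add: "x \<noteq> 0 \<Longrightarrow> y \<noteq> 0 \<Longrightarrow> x + y \<noteq> 0 \<Longrightarrow> v (x + y) \<ge> min (v x) (v y)"
  using discrete_valuation unfolding discrete_valuation_def by auto

lemma val_one: "v 1 = 0"
  using val_mult[of 1 1] by simp

lemma val_uminus: "v (- x) = v x"
proof (cases "x = 0")
  case False
  have "v ((-1) * (-1)) = v (-1) + v (-1)" by (rule val_mult) auto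
  then have "v (-1) = 0" using val_one by simp
  moreover have "v ((-1) * x) = v (-1) + v x" using False by (intro val_mult) auto
  ultimately show ?thesis by simp
qed simp

lemma val_power: "v (p ^ k) = int k"
proof (induction k)
  case (Suc k) then show ?case using val_mult[of p "p ^ k"] uniformizer_nonzero val_uniformizer by simp
qed (simp add: val_one)

lemma val_inverse: "x \<noteq> 0 \<Longrightarrow> v (inverse x) = - v x"
  using val_mult[of x "inverse x"] val_one by simp

lemma val_power_int: "v (p powi k) = k"
proof (cases "k \<ge> 0")
  case True then show ?thesis using val_power[of "nat k"] by (simp add: power_int_def)
next
  case False then show ?thesis
    using val_power[of "nat (-k)"] val_inverse[of "p ^ nat (-k)"] uniformizer_nonzero
    by (simp add: power_int_def power_inverse[symmetric])
qed

lemma val_ge_zero [simp]: "val_ge n 0"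
  by (simp add: val_ge_def)

lemma val_ge_val: "val_ge (v x) x"
  by (simp add: val_ge_def)

lemma val_ge_mono: "val_ge n x \<Longrightarrow> m \<le> n \<Longrightarrow> val_ge m x"
  unfolding val_ge_def by auto

lemma val_ge_add: "val_ge n x \<Longrightarrow> val_ge n y \<Longrightarrow> val_ge n (x + y)"
  unfolding val_ge_def using val_add[of x y] by force

lemma val_ge_uminus: "val_ge n x \<Longrightarrow> val_ge n (- x)"
  unfolding val_ge_def using val_uminus by auto

lemma val_ge_diff: "val_ge n x \<Longrightarrow> val_ge n y \<Longrightarrow> val_ge n (x - y)"
  using val_ge_add[of n x "- y"] val_ge_uminus by simp

lemma val_ge_mult: "val_ge n x \<Longrightarrow> val_ge m y \<Longrightarrow> val_ge (n + m) (x * y)"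
  unfolding val_ge_def using val_mult[of x y] by (cases "x = 0"; cases "y = 0") auto

lemma val_ge_sum: "(\<And>i. i \<in> A \<Longrightarrow> val_ge n (f i)) \<Longrightarrow> val_ge n (sum f A)"
  by (induction A rule: infinite_finite_induct) (auto intro: val_ge_add)

lemma val_add_eq_of_less:
  assumes "x \<noteq> 0" "val_ge (v x + 1) e"
  shows "x + e \<noteq> 0 \<and> v (x + e) = v x"
proof (cases "e = 0")
  case False
  then have ve: "v e > v x" using assms unfolding val_ge_def by auto
  have ne: "x + e \<noteq> 0"
  proof
    assume "x + e = 0"
    then have "e = - x" by (simp add: add_eq_0_iff)
    then show False using ve val_uminus by simp
  qed
  have "v (x + e) \<ge> v x" using val_add[OF assms(1) False ne] ve by simp
  moreover have "v ((x + e) + (- e)) \<ge> min (v (x + e)) (v (- e))"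
    using val_add[OF ne, of "- e"] False assms(1) by simp
  then have "v x \<ge> min (v (x + e)) (v e)" using val_uminus by simp
  ultimately show ?thesis using ne ve by linarith
qed (use assms in simp)

lemma vclose_iff_val_ge: "vclose v N x y \<longleftrightarrow> val_ge N (x - y)"
  unfolding vclose_def val_ge_def by auto

lemma mem_OK_iff: "x \<in> OK v \<longleftrightarrow> val_ge 0 x"
  unfolding OK_def val_ge_def by auto

lemma OK_semiring_closed: "semiring_closed (OK v)"
  using val_ge_mult[of 0 _ 0] by (simp add: semiring_closed_def mem_OK_iff val_ge_add)

lemma OK_zero: "0 \<in> OK v" and OK_diff: "x \<in> OK v \<Longrightarrow> y \<in> OK v \<Longrightarrow> x - y \<in> OK v"
  by (simp_all add: mem_OK_iff val_ge_diff)

lemma OK_mult: "x \<in> OK v \<Longrightarrow> y \<in> OK v \<Longrightarrow> x * y \<in> OK v"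
  using OK_semiring_closed by (simp add: semiring_closed_def)

end

section \<open>Evaluating power series at the uniformizer\<close>

locale complete_valued_field = valued_field v p
  for v :: "'k::field \<Rightarrow> int" and p :: 'k +
  assumes complete: "vcomplete v"
begin

definition partial_eval :: "'k fps \<Rightarrow> nat \<Rightarrow> 'k" where
  "partial_eval f N = (\<Sum>b<N. fps_nth f b * p ^ b)"

definition OK_coeffs :: "'k fps \<Rightarrow> bool" where
  "OK_coeffs f \<longleftrightarrow> (\<forall>b. fps_nth f b \<in> OK v)"

lemma vconverges_unique:
  assumes "vconverges v s L" "vconverges v s L'"
  shows "L = L'"
proof (rule ccontr)
  assume ne: "L \<noteq> L'"
  define N where "N = v (L - L') + 1"
  obtain M where "\<forall>m\<ge>M. vclose v N (s m) L" "\<forall>m\<ge>M. vclose v N (s m) L'"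
    using assms unfolding vconverges_def by (metis le_sup_iff)
  then have "val_ge N (s M - L')" "val_ge N (s M - L)"
    by (simp_all add: vclose_iff_val_ge)
  then have "val_ge N ((s M - L') - (s M - L))" by (rule val_ge_diff)
  then show False using ne unfolding val_ge_def N_def by (auto simp: algebra_simps)
qed

lemma partial_eval_tail:
  assumes "OK_coeffs f" "N \<le> m"
  shows "val_ge (int N) (partial_eval f m - partial_eval f N)"
proof -
  have "partial_eval f m - partial_eval f N = (\<Sum>b\<in>{N..<m}. fps_nth f b * p ^ b)"
    unfolding partial_eval_def using assms(2)
    by (metis add_diff_cancel_left' atLeast0LessThan sum.atLeastLessThan_concat zero_le)
  moreover have "val_ge (int N) (\<Sum>b\<in>{N..<m}. fps_nth f b * p ^ b)"
  proof (rule val_ge_sum)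
    fix b assume b: "b \<in> {N..<m}"
    have "val_ge (0 + int b) (fps_nth f b * p ^ b)"
      using assms(1) val_ge_val[of "p ^ b"] by (intro val_ge_mult) (auto simp: OK_coeffs_def mem_OK_iff val_power)
    then show "val_ge (int N) (fps_nth f b * p ^ b)" using b by (auto intro: val_ge_mono)
  qed
  ultimately show ?thesis by simp
qed

lemma fps_at_converges:
  assumes "OK_coeffs f"
  shows "vconverges v (partial_eval f) (fps_at v p f)"
proof -
  have "vcauchy v (partial_eval f)"
    unfolding vcauchy_def
  proof (intro allI exI impI)
    fix N :: int and m k assume "nat N \<le> m" "nat N \<le> k"
    then have "val_ge (int (nat N)) (partial_eval f m - partial_eval f (nat N))"
      "val_ge (int (nat N)) (partial_eval f k - partial_eval f (nat N))"
      using partial_eval_tail[OF assms] \<open>nat N \<le> m\<close> \<open>nat N \<le> k\<close> by blast+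
    then have "val_ge (int (nat N)) ((partial_eval f m - partial_eval f (nat N)) -
        (partial_eval f k - partial_eval f (nat N)))" by (rule val_ge_diff)
    then show "vclose v N (partial_eval f m) (partial_eval f k)"
      by (auto simp: vclose_iff_val_ge intro: val_ge_mono)
  qed
  then obtain L where L: "vconverges v (partial_eval f) L" using complete unfolding vcomplete_def by blast
  have "fps_at v p f = L" unfolding fps_at_def partial_eval_def[symmetric]
    using L vconverges_unique by (intro the1_equality) auto
  then show ?thesis using L by simp
qed

lemma fps_at_tail:
  assumes "OK_coeffs f"
  shows "val_ge (int N) (fps_at v p f - partial_eval f N)"
proof -
  obtain M where "\<forall>m\<ge>M. vclose v (int N) (partial_eval f m) (fps_at v p f)"
    using fps_at_converges[OF assms] unfolding vconverges_def by blast
  then have a: "val_ge (int N) (partial_eval f (max M N) - fps_at v p f)"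
    by (simp add: vclose_iff_val_ge)
  have b: "val_ge (int N) (partial_eval f (max M N) - partial_eval f N)"
    using partial_eval_tail[OF assms] by simp
  have "val_ge (int N) ((partial_eval f (max M N) - partial_eval f N) -
      (partial_eval f (max M N) - fps_at v p f))"
    using val_ge_diff[OF b a] .
  then show ?thesis by (simp add: algebra_simps)
qed

lemma fps_at_eqI:
  assumes "OK_coeffs f" "\<And>N. val_ge (int N) (c - partial_eval f N)"
  shows "fps_at v p f = c"
proof -
  have "vconverges v (partial_eval f) c"
    unfolding vconverges_def
  proof
    fix N :: int
    show "\<exists>M. \<forall>m\<ge>M. vclose v N (partial_eval f m) c"
    proof (intro exI[of _ "nat N"] allI impI)
      fix m assume "nat N \<le> m"
      have "val_ge (int m) (- (c - partial_eval f m))" using assms(2) val_ge_uminus by blast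
      then show "vclose v N (partial_eval f m) c"
        using \<open>nat N \<le> m\<close> by (auto simp: vclose_iff_val_ge intro: val_ge_mono)
    qed
  qed
  then show ?thesis using fps_at_converges[OF assms(1)] vconverges_unique by blast
qed

lemma fps_at_zero [simp]: "fps_at v p 0 = 0"
  by (rule fps_at_eqI) (auto simp: OK_coeffs_def partial_eval_def OK_zero)

lemma fps_at_lowest_term:
  assumes "OK_coeffs f"
  shows "val_ge (int (subdegree f) + 1) (fps_at v p f - lowest_coeff f * p ^ subdegree f)"
proof -
  have "partial_eval f (subdegree f) = 0"
    unfolding partial_eval_def by (intro sum.neutral) (auto dest: nth_less_subdegree_zero)
  then have "partial_eval f (Suc (subdegree f)) = lowest_coeff f * p ^ subdegree f"
    unfolding lowest_coeff_def by (simp add: partial_eval_def)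
  then show ?thesis using fps_at_tail[OF assms, of "Suc (subdegree f)"] by (simp add: add.commute)
qed

end

locale residue_valued_field = valued_field v p
  for v :: "'k::field \<Rightarrow> int" and p :: 'k +
  fixes res :: "'k \<Rightarrow> 'r::field"
  assumes residue_map: "residue_map v res"
begin

lemma res_add: "x \<in> OK v \<Longrightarrow> y \<in> OK v \<Longrightarrow> res (x + y) = res x + res y"
  and res_mult: "x \<in> OK v \<Longrightarrow> y \<in> OK v \<Longrightarrow> res (x * y) = res x * res y"
  and res_surj: "res ` OK v = UNIV"
  and res_eq_0_iff: "x \<in> OK v \<Longrightarrow> res x = 0 \<longleftrightarrow> val_ge 1 x"
  using residue_map unfolding residue_map_def val_ge_def by auto

lemma res_zero [simp]: "res 0 = 0"
  using res_eq_0_iff[OF OK_zero] by simp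

lemma res_diff: "x \<in> OK v \<Longrightarrow> y \<in> OK v \<Longrightarrow> res (x - y) = res x - res y"
  using res_add[of y "x - y"] OK_diff by simp

lemma res_eq_if_val_ge_diff:
  "x \<in> OK v \<Longrightarrow> y \<in> OK v \<Longrightarrow> val_ge 1 (x - y) \<Longrightarrow> res x = res y"
  using res_eq_0_iff[OF OK_diff] res_diff by fastforce

lemma reduce_t1_eq_sum:
  assumes "finite M" "Poly_Mapping.keys G \<subseteq> M"
  shows "reduce_t1 res G = (\<Sum>m\<in>M. Poly_Mapping.single (x_part m) (res (Poly_Mapping.lookup G m)))"
  unfolding reduce_t1_def by (rule sum.mono_neutral_left[OF assms]) (auto simp: in_keys_iff)

lemma reduce_t1_single:
  "reduce_t1 res (Poly_Mapping.single m c) = Poly_Mapping.single (x_part m) (res c)"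
  by (subst reduce_t1_eq_sum[of "{m}"]) auto

lemma reduce_t1_add:
  assumes "G \<in> coeff_ptx (OK v)" "H \<in> coeff_ptx (OK v)"
  shows "reduce_t1 res (G + H) = reduce_t1 res G + reduce_t1 res H"
proof -
  let ?M = "Poly_Mapping.keys G \<union> Poly_Mapping.keys H"
  have "reduce_t1 res (G + H) =
      (\<Sum>m\<in>?M. Poly_Mapping.single (x_part m) (res (Poly_Mapping.lookup (G + H) m)))"
    using keys_add[of G H] by (intro reduce_t1_eq_sum) auto
  also have "\<dots> = (\<Sum>m\<in>?M. Poly_Mapping.single (x_part m) (res (Poly_Mapping.lookup G m))) +
      (\<Sum>m\<in>?M. Poly_Mapping.single (x_part m) (res (Poly_Mapping.lookup H m)))"
    using assms by (simp add: lookup_add res_add coeff_ptx_def single_add sum.distrib)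
  also have "\<dots> = reduce_t1 res G + reduce_t1 res H"
    by (subst (1 2) reduce_t1_eq_sum[of ?M]) auto
  finally show ?thesis .
qed

lemma reduce_t1_sum:
  "(\<And>x. x \<in> X \<Longrightarrow> G x \<in> coeff_ptx (OK v)) \<Longrightarrow> reduce_t1 res (sum G X) = (\<Sum>x\<in>X. reduce_t1 res (G x))"
proof (induction X rule: infinite_finite_induct)
  case (insert x X)
  then show ?case
    using reduce_t1_add[of "G x" "sum G X"] coeff_ptx_sum[OF OK_semiring_closed, of X G] by simp
qed (simp_all add: reduce_t1_def)

lemma reduce_t1_mult:
  assumes "G \<in> coeff_ptx (OK v)" "H \<in> coeff_ptx (OK v)"
  shows "reduce_t1 res (G * H) = reduce_t1 res G * reduce_t1 res H"
proof -
  have OK: "Poly_Mapping.lookup G m * Poly_Mapping.lookup H m' \<in> OK v" for m m'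
    using assms by (auto simp: coeff_ptx_def intro: OK_mult)
  have "reduce_t1 res (G * H) = (\<Sum>m\<in>Poly_Mapping.keys G. \<Sum>m'\<in>Poly_Mapping.keys H.
      reduce_t1 res (Poly_Mapping.single (m + m') (Poly_Mapping.lookup G m * Poly_Mapping.lookup H m')))"
    unfolding times_poly_mapping_sum_single using OK OK_zero
    by (simp add: reduce_t1_sum coeff_ptx_single coeff_ptx_sum[OF OK_semiring_closed])
  also have "\<dots> = (\<Sum>m\<in>Poly_Mapping.keys G. \<Sum>m'\<in>Poly_Mapping.keys H.
      Poly_Mapping.single (x_part m) (res (Poly_Mapping.lookup G m)) *
      Poly_Mapping.single (x_part m') (res (Poly_Mapping.lookup H m')))"
    using assms by (simp add: reduce_t1_single res_mult coeff_ptx_def mult_single x_part_add)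
  also have "\<dots> = reduce_t1 res G * reduce_t1 res H"
    unfolding reduce_t1_def by (subst sum_distrib_right) (simp add: sum_distrib_left)
  finally show ?thesis .
qed

end

section \<open>Lowest terms and initial forms\<close>

locale complete_residue_valued_field = complete_valued_field v p + residue_valued_field v p res
  for v :: "'k::field \<Rightarrow> int" and p :: 'k and res :: "'k \<Rightarrow> 'r::field"
begin

lemma fps_at_lowest_coeff_unit:
  assumes f: "OK_coeffs f" and "res (lowest_coeff f) \<noteq> 0"
  shows "fps_at v p f \<noteq> 0 \<and> v (fps_at v p f) = int (subdegree f) \<and>
         res (fps_at v p f * p powi (- v (fps_at v p f))) = res (lowest_coeff f)"
proof -
  define c d where "c = lowest_coeff f" and "d = subdegree f"
  define e where "e = fps_at v p f - c * p ^ d"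
  have c: "c \<in> OK v" using f by (simp add: OK_coeffs_def c_def lowest_coeff_def)
  then have "c \<noteq> 0" "v c = 0" using assms(2) res_eq_0_iff[OF c] by (auto simp: c_def val_ge_def mem_OK_iff)
  then have cp: "c * p ^ d \<noteq> 0" "v (c * p ^ d) = int d"
    using val_mult[of c "p ^ d"] uniformizer_nonzero by (auto simp: val_power)
  have e: "val_ge (int d + 1) e" using fps_at_lowest_term[OF f] by (simp add: e_def c_def d_def)
  have eq: "fps_at v p f = c * p ^ d + e" by (simp add: e_def)
  have val: "fps_at v p f \<noteq> 0" "v (fps_at v p f) = int d"
    using val_add_eq_of_less[OF cp(1)] e cp(2) eq by auto
  have "p ^ d * p powi (- int d) = 1"
    using uniformizer_nonzero by (simp add: power_int_minus field_simps)
  then have normalize: "fps_at v p f * p powi (- int d) = c + e * p powi (- int d)"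
    by (simp add: eq algebra_simps)
  have "val_ge ((int d + 1) + (- int d)) (e * p powi (- int d))"
    using e val_ge_val[of "p powi (- int d)"] by (intro val_ge_mult) (auto simp: val_power_int)
  then have "val_ge 1 (e * p powi (- int d))" by simp
  moreover from this have "e * p powi (- int d) \<in> OK v" by (simp add: mem_OK_iff val_ge_mono)
  ultimately have "res (fps_at v p f * p powi (- int d)) = res c"
    using normalize res_add[OF c] res_eq_0_iff by simp
  then show ?thesis using val by (simp add: c_def d_def)
qed

lemma fps_at_lowest_coeff_nonunit:
  assumes f: "OK_coeffs f" and "res (lowest_coeff f) = 0"
  shows "val_ge (int (subdegree f) + 1) (fps_at v p f)"
proof -
  have "lowest_coeff f \<in> OK v" using f by (simp add: OK_coeffs_def lowest_coeff_def)
  then have "val_ge 1 (lowest_coeff f)" using assms(2) res_eq_0_iff by simp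
  then have "val_ge (1 + int (subdegree f)) (lowest_coeff f * p ^ subdegree f)"
    using val_ge_val[of "p ^ subdegree f"] by (intro val_ge_mult) (auto simp: val_power)
  then have "val_ge (int (subdegree f) + 1)
      ((fps_at v p f - lowest_coeff f * p ^ subdegree f) + lowest_coeff f * p ^ subdegree f)"
    using fps_at_lowest_term[OF f] by (intro val_ge_add) (auto simp: add.commute)
  then show ?thesis by simp
qed

definition unit_initial_keys :: "('n::finite \<Rightarrow> real) \<Rightarrow> (('n \<Rightarrow>\<^sub>0 nat) \<Rightarrow>\<^sub>0 'k fps) \<Rightarrow> ('n \<Rightarrow>\<^sub>0 nat) set"
  where "unit_initial_keys w F = {a \<in> initial_keys w F. res (lowest_coeff (Poly_Mapping.lookup F a)) \<noteq> 0}"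

lemma lookup_pi_map: "Poly_Mapping.lookup (pi_map v p F) a = fps_at v p (Poly_Mapping.lookup F a)"
proof -
  have "Poly_Mapping.lookup (pi_map v p F) a =
      (\<Sum>x\<in>Poly_Mapping.keys F. if x = a then fps_at v p (Poly_Mapping.lookup F x) else 0)"
    unfolding pi_map_def lookup_sum by (intro sum.cong) (auto simp: lookup_single when_def)
  then show ?thesis by (simp add: sum.delta in_keys_iff)
qed

lemma reduce_t1_in_tw:
  assumes "F \<in> coeff_pstx (OK v)" "F \<noteq> 0"
  shows "reduce_t1 res (in_tw w F) =
    (\<Sum>a\<in>unit_initial_keys w F. Poly_Mapping.single a (res (lowest_coeff (Poly_Mapping.lookup F a))))"
proof -
  have "lowest_coeff (Poly_Mapping.lookup F a) \<in> OK v" for a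
    using assms(1) by (simp add: coeff_pstx_def lowest_coeff_def)
  then have "reduce_t1 res (in_tw w F) =
      (\<Sum>a\<in>initial_keys w F. Poly_Mapping.single a (res (lowest_coeff (Poly_Mapping.lookup F a))))"
    unfolding in_tw_eq_sum[OF assms(2)]
    by (simp add: reduce_t1_sum reduce_t1_single coeff_ptx_single OK_zero)
  also have "\<dots> = (\<Sum>a\<in>unit_initial_keys w F.
      Poly_Mapping.single a (res (lowest_coeff (Poly_Mapping.lookup F a))))"
    by (rule sum.mono_neutral_right) (auto simp: unit_initial_keys_def initial_keys_def)
  finally show ?thesis .
qed

lemma in_vw_pi_map:
  assumes F: "F \<in> coeff_pstx (OK v)" and "unit_initial_keys w F \<noteq> {}"
  shows "in_vw v p res w (pi_map v p F) =
    (\<Sum>a\<in>unit_initial_keys w F. Poly_Mapping.single a (res (lowest_coeff (Poly_Mapping.lookup F a))))"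
proof -
  define f where "f = pi_map v p F"
  define wt where "wt a = wdot w a - real_of_int (v (Poly_Mapping.lookup f a))" for a
  let ?M = "initial_weight w F" and ?c = "\<lambda>a. lowest_coeff (Poly_Mapping.lookup F a)"
  have lookup_f: "Poly_Mapping.lookup f a = fps_at v p (Poly_Mapping.lookup F a)" for a
    by (simp add: f_def lookup_pi_map)
  have keys_f: "Poly_Mapping.keys f \<subseteq> Poly_Mapping.keys F"
    by (auto simp: in_keys_iff lookup_f)
  have coeffs: "OK_coeffs (Poly_Mapping.lookup F a)" for a
    using F by (simp add: coeff_pstx_def OK_coeffs_def)
  have unit: "Poly_Mapping.lookup f a \<noteq> 0 \<and> wt a = top_weight w F a \<and>
      res (Poly_Mapping.lookup f a * p powi (- v (Poly_Mapping.lookup f a))) = res (?c a)"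
    if "res (?c a) \<noteq> 0" for a
    using fps_at_lowest_coeff_unit[OF coeffs that]
    unfolding lookup_f wt_def top_weight_def by (metis of_int_of_nat_eq)
  have nonunit: "wt a < ?M" if a: "a \<in> Poly_Mapping.keys f" "res (?c a) = 0" for a
  proof -
    have "val_ge (int (subdegree (Poly_Mapping.lookup F a)) + 1) (Poly_Mapping.lookup f a)"
      using fps_at_lowest_coeff_nonunit[OF coeffs a(2)] by (simp add: lookup_f)
    then have "wt a \<le> top_weight w F a - 1"
      using a(1) by (auto simp: val_ge_def in_keys_iff wt_def top_weight_def)
    then show ?thesis using top_weight_le_initial_weight[of a F w] a(1) keys_f by auto
  qed
  have wt_le: "wt a \<le> ?M" if "a \<in> Poly_Mapping.keys f" for a
    using unit nonunit that keys_f top_weight_le_initial_weight by (metis less_eq_real_def subsetD)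
  have unit_keys: "a \<in> Poly_Mapping.keys f \<and> wt a = ?M" if "a \<in> unit_initial_keys w F" for a
    using unit that by (auto simp: unit_initial_keys_def initial_keys_def in_keys_iff)
  moreover obtain a where "a \<in> unit_initial_keys w F" using assms(2) by blast
  ultimately have "Max (wt ` Poly_Mapping.keys f) = ?M"
    using wt_le by (intro Max_eqI) (auto intro: rev_image_eqI[of a])
  moreover have "{a \<in> Poly_Mapping.keys f. wt a = ?M} = unit_initial_keys w F"
    using unit_keys unit nonunit keys_f
    by (auto simp: unit_initial_keys_def initial_keys_def) (metis less_irrefl)+
  ultimately show ?thesis
    unfolding f_def[symmetric] in_vw_def Let_def wt_def[symmetric]
    using unit by (intro sum.cong) (auto simp: unit_initial_keys_def)
qed

lemma reduce_t1_in_tw_cases: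
  assumes "F \<in> coeff_pstx (OK v)"
  shows "reduce_t1 res (in_tw w F) \<in> {0, in_vw v p res w (pi_map v p F)}"
proof (cases "F = 0")
  case True then show ?thesis by (simp add: in_tw_def tx_terms_def reduce_t1_def)
next
  case False
  then show ?thesis
    using reduce_t1_in_tw[OF assms False] in_vw_pi_map[OF assms] by (cases "unit_initial_keys w F = {}") auto
qed

end

section \<open>Valued fields with a dense subring\<close>

locale valued_field_dense_subring = complete_residue_valued_field v p res
  for v :: "'k::field \<Rightarrow> int" and p :: 'k and res :: "'k \<Rightarrow> 'r::field" +
  fixes R :: "'k set"
  assumes dense_subring: "dense_noeth_subring v p R"
begin

lemma R_subset_OK: "R \<subseteq> OK v"
  and dense: "x \<in> OK v \<Longrightarrow> \<exists>r\<in>R. vclose v N x r"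
  and R_semiring_closed: "semiring_closed R"
  using dense_subring
  unfolding dense_noeth_subring_def noetherian_subring_def is_subring_def semiring_closed_def
  by auto

lemma zero_in_R: "0 \<in> R"
  using R_semiring_closed by (simp add: semiring_closed_def)

lemma coeff_pstx_R_OK: "F \<in> coeff_pstx R \<Longrightarrow> F \<in> coeff_pstx (OK v)"
  using R_subset_OK by (auto simp: coeff_pstx_def)

lemma coeff_ptx_R_OK: "G \<in> coeff_ptx R \<Longrightarrow> G \<in> coeff_ptx (OK v)"
  using R_subset_OK by (auto simp: coeff_ptx_def)

lemma residue_lift: "\<exists>r\<in>R. res r = c"
proof -
  obtain x where x: "x \<in> OK v" "res x = c" using res_surj by (metis UNIV_I imageE)
  obtain r where r: "r \<in> R" "vclose v 1 x r" using dense[OF x(1)] by blast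
  then have "r \<in> OK v" using R_subset_OK by blast
  then have "res r = c" using x r res_eq_if_val_ge_diff[of x r] by (simp add: vclose_iff_val_ge)
  then show ?thesis using r by blast
qed

lemma reduce_t1_surj: "reduce_t1 res ` coeff_ptx R = UNIV"
proof -
  have "g \<in> reduce_t1 res ` coeff_ptx R" for g
  proof -
    obtain lift where lift: "lift c \<in> R" "res (lift c) = c" for c
      using residue_lift by metis
    define G where "G = (\<Sum>a\<in>Poly_Mapping.keys g.
      Poly_Mapping.single (tx_mono a 0) (lift (Poly_Mapping.lookup g a)))"
    have "G \<in> coeff_ptx R"
      unfolding G_def using R_semiring_closed zero_in_R lift by (intro coeff_ptx_sum coeff_ptx_single) auto
    have "reduce_t1 res G = (\<Sum>a\<in>Poly_Mapping.keys g. Poly_Mapping.single a (Poly_Mapping.lookup g a))"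
      unfolding G_def using lift R_subset_OK OK_zero
      by (subst reduce_t1_sum) (auto simp: reduce_t1_single intro!: coeff_ptx_single)
    then have "reduce_t1 res G = g" using poly_mapping_sum_single[of g] by simp
    with \<open>G \<in> coeff_ptx R\<close> show ?thesis by blast
  qed
  then show ?thesis by blast
qed

text \<open>Choosing the digit 0 whenever the residue vanishes makes every nonzero digit a unit, so the
  lowest t-coefficient of the lift constructed from the digits is a unit.\<close>

definition digit :: "'k \<Rightarrow> 'k" where
  "digit x = (if res x = 0 then 0 else (SOME r. r \<in> R \<and> vclose v 1 x r))"

definition digit_shift :: "'k \<Rightarrow> 'k" where
  "digit_shift x = (x - digit x) / p"

definition digits :: "'k \<Rightarrow> nat \<Rightarrow> 'k" where
  "digits c k = digit ((digit_shift ^^ k) c)"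

lemma digit_props:
  assumes x: "x \<in> OK v"
  shows "digit x \<in> R \<and> val_ge 1 (x - digit x) \<and> (digit x \<noteq> 0 \<longrightarrow> res (digit x) \<noteq> 0)"
proof (cases "res x = 0")
  case True then show ?thesis using res_eq_0_iff[OF x] zero_in_R by (simp add: digit_def)
next
  case False
  have "\<exists>r. r \<in> R \<and> vclose v 1 x r" using dense[OF x] by blast
  then have r: "digit x \<in> R" "val_ge 1 (x - digit x)"
    using False someI_ex[of "\<lambda>r. r \<in> R \<and> vclose v 1 x r"] by (auto simp: digit_def vclose_iff_val_ge)
  moreover from r(1) have "digit x \<in> OK v" using R_subset_OK by blast
  ultimately have "res (digit x) = res x" using res_eq_if_val_ge_diff[OF x] by simp
  then show ?thesis using r False by simp
qed

lemma digit_shift_OK: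
  assumes "x \<in> OK v"
  shows "digit_shift x \<in> OK v"
proof -
  have "val_ge (-1) (inverse p)"
    using val_ge_val[of "inverse p"] val_inverse[OF uniformizer_nonzero] by (simp add: val_uniformizer)
  then have "val_ge (1 + (-1)) ((x - digit x) * inverse p)"
    using digit_props[OF assms] by (intro val_ge_mult) auto
  then show ?thesis by (simp add: digit_shift_def mem_OK_iff divide_inverse)
qed

lemma digit_shift_power_OK: "c \<in> OK v \<Longrightarrow> (digit_shift ^^ k) c \<in> OK v"
  by (induction k) (auto intro: digit_shift_OK)

lemma digits_props:
  assumes "c \<in> OK v"
  shows "digits c k \<in> R" "digits c k \<noteq> 0 \<Longrightarrow> res (digits c k) \<noteq> 0"
  unfolding digits_def using digit_props[OF digit_shift_power_OK[OF assms]] by blast+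

lemma digits_zero: "digits 0 k = 0"
proof -
  have "(digit_shift ^^ k) 0 = 0" by (induction k) (auto simp: digit_shift_def digit_def)
  then show ?thesis by (simp add: digits_def digit_def)
qed

lemma digits_expansion:
  "c = partial_eval (Abs_fps (digits c)) N + p ^ N * (digit_shift ^^ N) c"
proof (induction N)
  case (Suc N)
  define u where "u = (digit_shift ^^ N) c"
  have "u = digit u + p * digit_shift u" using uniformizer_nonzero by (simp add: digit_shift_def)
  then have "p ^ N * u = p ^ N * digit u + p ^ Suc N * digit_shift u"
    by (metis distrib_left mult.assoc power_Suc2)
  then have "p ^ N * u = digits c N * p ^ N + p ^ Suc N * (digit_shift ^^ Suc N) c"
    by (simp add: u_def digits_def mult.commute)
  then show ?case using Suc by (simp add: partial_eval_def u_def algebra_simps)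
qed (simp add: partial_eval_def)

lemma fps_at_digits:
  assumes c: "c \<in> OK v"
  shows "OK_coeffs (Abs_fps (digits c))" "fps_at v p (Abs_fps (digits c)) = c"
proof -
  show coeffs: "OK_coeffs (Abs_fps (digits c))"
    using digits_props[OF c] R_subset_OK by (auto simp: OK_coeffs_def)
  show "fps_at v p (Abs_fps (digits c)) = c"
  proof (rule fps_at_eqI[OF coeffs])
    fix N
    have "val_ge (int N + 0) (p ^ N * (digit_shift ^^ N) c)"
      using val_ge_val[of "p ^ N"] digit_shift_power_OK[OF c, of N]
      by (intro val_ge_mult) (auto simp: mem_OK_iff val_power)
    moreover have "c - partial_eval (Abs_fps (digits c)) N = p ^ N * (digit_shift ^^ N) c"
      using digits_expansion[of c N] by (simp add: algebra_simps)
    ultimately show "val_ge (int N) (c - partial_eval (Abs_fps (digits c)) N)" by simp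
  qed
qed

lemma exists_lift_in_tw:
  assumes f: "f \<in> coeff_poly (OK v)"
  shows "\<exists>F\<in>coeff_pstx R. pi_map v p F = f \<and> reduce_t1 res (in_tw w F) = in_vw v p res w f"
proof -
  define F where "F = Poly_Mapping.map (\<lambda>c. Abs_fps (digits c)) f"
  have fa: "Poly_Mapping.lookup f a \<in> OK v" for a
    using f by (simp add: coeff_poly_def)
  have lookup_F: "Poly_Mapping.lookup F a = Abs_fps (digits (Poly_Mapping.lookup f a))" for a
    unfolding F_def by (rule lookup_map_zero) (simp add: digits_zero fps_eq_iff)
  have FR: "F \<in> coeff_pstx R" using digits_props(1)[OF fa] by (simp add: coeff_pstx_def lookup_F)
  have pi: "pi_map v p F = f"
    by (rule poly_mapping_eqI) (simp add: lookup_pi_map lookup_F fps_at_digits[OF fa])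
  have "reduce_t1 res (in_tw w F) = in_vw v p res w f"
  proof (cases "F = 0")
    case True
    then show ?thesis using pi by (simp add: in_tw_def tx_terms_def reduce_t1_def in_vw_def pi_map_def)
  next
    case False
    obtain a where a: "a \<in> initial_keys w F" using initial_keys_nonempty[OF False] by blast
    then have "lowest_coeff (Poly_Mapping.lookup F a) \<noteq> 0"
      using lowest_coeff_nonzero[of a F] by (simp add: initial_keys_def)
    then have "res (lowest_coeff (Poly_Mapping.lookup F a)) \<noteq> 0"
      using digits_props(2)[OF fa] by (simp add: lowest_coeff_def lookup_F)
    then have "unit_initial_keys w F \<noteq> {}" using a by (auto simp: unit_initial_keys_def)
    then show ?thesis
      using reduce_t1_in_tw[OF coeff_pstx_R_OK[OF FR] False] in_vw_pi_map[OF coeff_pstx_R_OK[OF FR]] pi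
      by simp
  qed
  then show ?thesis using FR pi by blast
qed

lemma reduce_t1_in_tw_preimage_subset:
  "reduce_t1 res ` in_tw w ` pi_preimage v p R I \<subseteq> insert 0 (in_vw v p res w ` I)"
  using reduce_t1_in_tw_cases[OF coeff_pstx_R_OK] by (fastforce simp: pi_preimage_def)

lemma in_vw_subset_reduce_t1_in_tw_preimage:
  assumes "I \<subseteq> coeff_poly (OK v)"
  shows "in_vw v p res w ` I \<subseteq> reduce_t1 res ` in_tw w ` pi_preimage v p R I"
proof
  fix g assume "g \<in> in_vw v p res w ` I"
  then obtain f where f: "f \<in> I" "g = in_vw v p res w f" by blast
  then obtain F where "F \<in> pi_preimage v p R I" "reduce_t1 res (in_tw w F) = g"
    using exists_lift_in_tw[of f w] assms by (auto simp: pi_preimage_def)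
  then show "g \<in> reduce_t1 res ` in_tw w ` pi_preimage v p R I" by (metis image_eqI)
qed

end

theorem proposition2p8:
  fixes v :: "'k::field \<Rightarrow> int" and p :: 'k and res :: "'k \<Rightarrow> 'r::field"
    and R :: "'k set" and I :: "(('n::finite \<Rightarrow>\<^sub>0 nat) \<Rightarrow>\<^sub>0 'k) set" and w :: "'n \<Rightarrow> real"
  assumes "discrete_valuation v p"
    and "vcomplete v"
    and "residue_map v res"
    and "dense_noeth_subring v p R"
    and "is_ideal (coeff_poly (OK v)) I"
  shows "reduce_t1 res ` in_tw_ideal R w (pi_preimage v p R I) = in_vw_ideal v p res w I"
proof -
  interpret valued_field_dense_subring v p res R
    using assms(1-4) by unfold_locales
  let ?A = "coeff_ptx R :: (('n option \<Rightarrow>\<^sub>0 nat) \<Rightarrow>\<^sub>0 'k) set"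
  let ?S = "in_tw w ` pi_preimage v p R I"
  have "reduce_t1 res ` ideal_gen ?A ?S = ideal_gen UNIV (in_vw v p res w ` I)"
  proof (rule image_ideal_gen)
    show "is_ideal ?A ?A" by (rule is_ideal_coeff_ptx[OF R_semiring_closed])
    show "reduce_t1 res (G + H) = reduce_t1 res G + reduce_t1 res H"
      and "reduce_t1 res (G * H) = reduce_t1 res G * reduce_t1 res H"
      if "G \<in> ?A" "H \<in> ?A" for G H
      using that by (simp_all add: reduce_t1_add reduce_t1_mult coeff_ptx_R_OK)
    show "?S \<subseteq> ?A" "reduce_t1 res ` ?A = UNIV"
      using in_tw_mem_coeff_ptx[OF R_semiring_closed]
      by (auto simp: pi_preimage_def reduce_t1_surj)
    show "reduce_t1 res ` ?S \<subseteq> insert 0 (in_vw v p res w ` I)"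
      by (rule reduce_t1_in_tw_preimage_subset)
    show "in_vw v p res w ` I \<subseteq> reduce_t1 res ` ?S"
      using assms(5) by (intro in_vw_subset_reduce_t1_in_tw_preimage) (simp add: is_ideal_def)
  qed
  then show ?thesis unfolding in_tw_ideal_def in_vw_ideal_def .
qed

end
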